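(* Let $(\Omega,\Sigma,\mu;\phi)$ be a measure preserving dynamical system with associated Perron-Frobenius operator $P$ on $L^1(\Omega,\Sigma,\mu)$. Then the following are equivalent: (i) The sequence $(P^n)_{n\in\mathbb{N}}$ converges with respect to the strong operator topology. (ii) For each $B\in\Sigma$ with $\mu(B)>0$ there exist $D\in\Sigma$ with $\mu(D)>0$ and a constant $c>0$ such that \[\liminf_{n\to\infty}\inf_{A\in\Sigma}\bigl(\mu(\phi^{-n}(A)\cap B)-c\,\mu(D\cap A)\bigr)\ge 0.\]
   Context: A measure preserving dynamical system $(\Omega,\Sigma,\mu;\phi)$ is a probability space with a measurable map $\phi\colon\Omega\to\Omega$ such that $\mu(\phi^{-1}(A))=\mu(A)$ for all $A\in\Sigma$. The Perron-Frobenius operator $P$ is the unique linear positive operator on $L^1(\Omega,\Sigma,\mu)$ with $\int_A Pf\,d\mu=\int_{\phi^{-1}(A)}f\,d\mu$ for all $f\in L^1$, $A\in\Sigma$. *)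

theory Defs
  imports "HOL-Probability.Probability"
begin

definition mpds :: "'a measure \<Rightarrow> ('a \<Rightarrow> 'a) \<Rightarrow> bool" where
  "mpds M \<phi> \<longleftrightarrow> prob_space M \<and> \<phi> \<in> measurable M M \<and>
     (\<forall>A\<in>sets M. measure M (\<phi> -` A \<inter> space M) = measure M A)"

text \<open>P is (a representative of) the Perron-Frobenius operator on L1: it maps
integrable functions to integrable functions with the defining identity
int_A Pf = int_{phi^-1 A} f. This determines Pf uniquely up to a.e. equality.\<close>
definition perron_frobenius ::
  "'a measure \<Rightarrow> ('a \<Rightarrow> 'a) \<Rightarrow> (('a \<Rightarrow> real) \<Rightarrow> ('a \<Rightarrow> real)) \<Rightarrow> bool" where
  "perron_frobenius M \<phi> P \<longleftrightarrow>
     (\<forall>f. integrable M f \<longrightarrow> integrable M (P f) \<and>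
        (\<forall>A\<in>sets M. (\<integral>x\<in>A. P f x \<partial>M) = (\<integral>x\<in>(\<phi> -` A \<inter> space M). f x \<partial>M)))"

definition sot_convergent_L1 :: "'a measure \<Rightarrow> (('a \<Rightarrow> real) \<Rightarrow> ('a \<Rightarrow> real)) \<Rightarrow> bool" where
  "sot_convergent_L1 M P \<longleftrightarrow>
     (\<forall>f. integrable M f \<longrightarrow> (\<exists>g. integrable M g \<and>
        (\<lambda>n. \<integral>x. \<bar>(P ^^ n) f x - g x\<bar> \<partial>M) \<longlonglongrightarrow> 0))"

end

theory Submission
  imports Defs
begin

text \<open>
  (i) implies (ii): if \<open>P\<^sup>n 1\<^sub>B\<close> converges in \<open>L\<^sup>1\<close> to \<open>g\<close>, then \<open>g \<ge> 0\<close> and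
  \<open>\<integral> g \<ge> \<mu> B > 0\<close>, so \<open>D = {g \<ge> c}\<close> has positive measure for some \<open>c > 0\<close>. Moreover
  \<open>\<mu> (\<phi>\<^sup>-\<^sup>n A \<inter> B) = \<integral>\<^sub>A P\<^sup>n 1\<^sub>B\<close> differs from \<open>\<integral>\<^sub>A g \<ge> c \<mu> (D \<inter> A)\<close> by at most
  \<open>\<parallel>P\<^sup>n 1\<^sub>B - g\<parallel>\<^sub>1\<close>, uniformly in \<open>A\<close>.

  (ii) implies (i): \<open>P\<close> is an \<open>L\<^sup>1\<close>-contraction, so it suffices to treat \<open>0 \<le> f \<le> c\<close>.
  Since \<open>P\<close> is adjoint to the \<open>L\<^sup>2\<close>-isometry \<open>v \<mapsto> v \<circ> \<phi>\<close>, the orbit \<open>h\<^sub>n = P\<^sup>n f\<close> satisfies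
  \<open>\<parallel>h\<^sub>n - h\<^sub>n\<^sub>+\<^sub>k \<circ> \<phi>\<^sup>k\<parallel>\<^sub>2\<^sup>2 = \<parallel>h\<^sub>n\<parallel>\<^sub>2\<^sup>2 - \<parallel>h\<^sub>n\<^sub>+\<^sub>k\<parallel>\<^sub>2\<^sup>2\<close>. As \<open>\<parallel>h\<^sub>n\<parallel>\<^sub>2\<close> decreases, for each \<open>j\<close>
  the functions \<open>h\<^sub>n\<^sub>+\<^sub>j \<circ> \<phi>\<^sup>n\<close> converge in \<open>L\<^sup>1\<close> to some \<open>T\<^sub>j\<close>, with \<open>T\<^sub>j\<^sub>+\<^sub>1 \<circ> \<phi> = T\<^sub>j\<close> and
  \<open>\<parallel>h\<^sub>j - T\<^sub>j\<parallel>\<^sub>1 \<rightarrow> 0\<close>. Condition (ii) forbids a set of positive measure whose orbit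
  alternates between pairwise disjoint consecutive sets; applied to the level sets of the
  \<open>T\<^sub>j\<close>, this forces all \<open>T\<^sub>j\<close> to coincide, hence \<open>h\<^sub>n \<rightarrow> T\<^sub>0\<close>.
\<close>


section \<open>Integrals and \<open>L\<^sup>1\<close> convergence\<close>

lemma eq_of_rat_less_iff:
  fixes a b :: real
  assumes "\<And>q. of_rat q < a \<longleftrightarrow> of_rat q < b"
  shows "a = b"
proof (cases a b rule: linorder_cases)
  case less
  then obtain r where "r \<in> \<rat>" "a < r" "r < b" using Rats_dense_in_real by blast
  then obtain q where "a < of_rat q" "of_rat q < b" by (auto elim: Rats_cases)
  with assms[of q] show ?thesis by simp
next
  case greater
  then obtain r where "r \<in> \<rat>" "b < r" "r < a" using Rats_dense_in_real by blast
  then obtain q where "b < of_rat q" "of_rat q < a" by (auto elim: Rats_cases)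
  with assms[of q] show ?thesis by simp
qed simp

lemma set_integrable_of_integrable:
  fixes f :: "'a \<Rightarrow> real"
  shows "integrable M f \<Longrightarrow> A \<in> sets M \<Longrightarrow> set_integrable M A f"
  unfolding set_integrable_def by (rule integrable_mult_indicator)

lemma emeasure_density_set_integral:
  fixes f :: "'a \<Rightarrow> real"
  assumes f: "integrable M f" and nonneg: "AE x in M. 0 \<le> f x" and A: "A \<in> sets M"
  shows "emeasure (density M (\<lambda>x. ennreal (f x))) A = ennreal (\<integral>x\<in>A. f x \<partial>M)"
proof -
  have "integrable M (\<lambda>x. indicator A x * f x)"
    using integrable_mult_indicator[OF A f] by simp
  with f nonneg A show ?thesis
    unfolding set_lebesgue_integral_def
    by (subst emeasure_density, simp_all, subst nn_integral_eq_integral[symmetric])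
      (auto intro!: nn_integral_cong elim: AE_mp split: split_indicator)
qed

lemma integral_abs_diff_triangle:
  fixes f g h :: "'a \<Rightarrow> real"
  assumes "integrable M f" "integrable M g" "integrable M h"
  shows "(\<integral>x. \<bar>f x - h x\<bar> \<partial>M) \<le> (\<integral>x. \<bar>f x - g x\<bar> \<partial>M) + (\<integral>x. \<bar>g x - h x\<bar> \<partial>M)"
proof -
  have "(\<integral>x. \<bar>f x - h x\<bar> \<partial>M) \<le> (\<integral>x. \<bar>f x - g x\<bar> + \<bar>g x - h x\<bar> \<partial>M)"
    using assms by (intro integral_mono) auto
  also have "\<dots> = (\<integral>x. \<bar>f x - g x\<bar> \<partial>M) + (\<integral>x. \<bar>g x - h x\<bar> \<partial>M)"
    using assms by (intro Bochner_Integration.integral_add) auto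
  finally show ?thesis .
qed

lemma set_integral_diff_abs_le:
  fixes u v :: "'a \<Rightarrow> real"
  assumes u: "integrable M u" and v: "integrable M v" and A: "A \<in> sets M"
  shows "\<bar>(\<integral>x\<in>A. u x \<partial>M) - (\<integral>x\<in>A. v x \<partial>M)\<bar> \<le> (\<integral>x. \<bar>u x - v x\<bar> \<partial>M)"
proof -
  have "(\<integral>x\<in>A. u x \<partial>M) - (\<integral>x\<in>A. v x \<partial>M) = (\<integral>x. indicator A x * (u x - v x) \<partial>M)"
    using integrable_mult_indicator[OF A u] integrable_mult_indicator[OF A v]
    by (simp add: set_lebesgue_integral_def right_diff_distrib)
  also have "\<bar>\<dots>\<bar> \<le> (\<integral>x. \<bar>u x - v x\<bar> \<partial>M)"
  proof -
    have "integrable M (\<lambda>x. indicator A x * (u x - v x))"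
      using integrable_mult_indicator[OF A Bochner_Integration.integrable_diff[OF u v]] by simp
    then have "\<bar>\<integral>x. indicator A x * (u x - v x) \<partial>M\<bar> \<le> (\<integral>x. \<bar>indicator A x * (u x - v x)\<bar> \<partial>M)"
      using integral_norm_bound[of M "\<lambda>x. indicator A x * (u x - v x)"] by simp
    also have "\<dots> \<le> (\<integral>x. \<bar>u x - v x\<bar> \<partial>M)"
      using \<open>integrable M (\<lambda>x. indicator A x * (u x - v x))\<close> u v
      by (intro integral_mono) (auto simp: indicator_def)
    finally show ?thesis .
  qed
  finally show ?thesis .
qed

lemma (in finite_measure) integrable_indicator_real:
  "B \<in> sets M \<Longrightarrow> integrable M (indicator B :: 'a \<Rightarrow> real)"
  by (intro integrable_real_indicator) (simp_all add: less_top[symmetric])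

lemma (in prob_space) integral_abs_le_of_integral_square_le:
  fixes w :: "'a \<Rightarrow> real"
  assumes w: "integrable M w" and w2: "integrable M (\<lambda>x. (w x)\<^sup>2)"
    and e: "e > 0" and le: "(\<integral>x. (w x)\<^sup>2 \<partial>M) \<le> e\<^sup>2"
  shows "(\<integral>x. \<bar>w x\<bar> \<partial>M) \<le> e"
proof -
  have pointwise: "\<bar>w x\<bar> \<le> (w x)\<^sup>2 / (2 * e) + e / 2" for x
  proof -
    have "0 \<le> (\<bar>w x\<bar> - e)\<^sup>2" by simp
    then show ?thesis using e by (simp add: field_simps power2_eq_square)
  qed
  have "(\<integral>x. \<bar>w x\<bar> \<partial>M) \<le> (\<integral>x. (w x)\<^sup>2 / (2 * e) + e / 2 \<partial>M)"
    using w w2 pointwise by (intro integral_mono) auto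
  also have "\<dots> = (\<integral>x. (w x)\<^sup>2 \<partial>M) / (2 * e) + e / 2"
    using w2 by (simp add: prob_space)
  also have "\<dots> \<le> e\<^sup>2 / (2 * e) + e / 2"
    using le e by (intro add_mono divide_right_mono) auto
  also have "\<dots> = e" using e by (simp add: power2_eq_square)
  finally show ?thesis .
qed

lemma (in prob_space) exists_level_set_pos:
  fixes g :: "'a \<Rightarrow> real"
  assumes g: "integrable M g" and pos: "(\<integral>x. g x \<partial>M) > 0"
  shows "\<exists>c>0. measure M {x \<in> space M. c \<le> g x} > 0"
proof (rule ccontr)
  define c where "c = (\<integral>x. g x \<partial>M) / 2"
  have [measurable]: "g \<in> borel_measurable M" using g by simp
  assume "\<not> ?thesis"
  moreover have "c > 0" using pos by (simp add: c_def)
  ultimately have "\<not> measure M {x \<in> space M. c \<le> g x} > 0" by blast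
  then have "measure M {x \<in> space M. c \<le> g x} = 0"
    using measure_nonneg[of M "{x \<in> space M. c \<le> g x}"] by linarith
  then have "AE x in M. x \<notin> {x \<in> space M. c \<le> g x}"
    by (intro AE_not_in) (simp add: null_sets_def emeasure_eq_measure)
  then have "AE x in M. g x \<le> c" using AE_space by eventually_elim auto
  then have "(\<integral>x. g x \<partial>M) \<le> (\<integral>x. c \<partial>M)" using g by (intro integral_mono_AE) auto
  then show False using pos by (simp add: c_def prob_space)
qed

lemma (in finite_measure) set_integral_ge_level_set:
  fixes g :: "'a \<Rightarrow> real"
  assumes g: "integrable M g" and nonneg: "AE x in M. 0 \<le> g x" and A: "A \<in> sets M"
  shows "c * measure M ({x \<in> space M. c \<le> g x} \<inter> A) \<le> (\<integral>x\<in>A. g x \<partial>M)"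
proof -
  define D where "D = {x \<in> space M. c \<le> g x}"
  have D[measurable]: "D \<in> sets M" using g unfolding D_def by measurable
  have "(\<integral>x. indicator A x * (c * indicator D x) \<partial>M) = (\<integral>x. c * indicator (D \<inter> A) x \<partial>M)"
    by (intro Bochner_Integration.integral_cong) (auto simp: indicator_def)
  then have "c * measure M (D \<inter> A) = (\<integral>x. indicator A x * (c * indicator D x) \<partial>M)"
    using A by (simp add: Int_absorb2)
  also have "\<dots> \<le> (\<integral>x. indicator A x * g x \<partial>M)"
  proof (rule integral_mono_AE)
    have "integrable M (\<lambda>x. c * indicator D x)"
      using D by (simp add: less_top[symmetric])
    from integrable_mult_indicator[OF A this] integrable_mult_indicator[OF A g]
    show "integrable M (\<lambda>x. indicator A x * (c * indicator D x))"
      "integrable M (\<lambda>x. indicator A x * g x)" by simp_all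
    show "AE x in M. indicator A x * (c * indicator D x) \<le> indicator A x * g x"
      using nonneg by eventually_elim (auto simp: D_def indicator_def)
  qed
  finally show ?thesis by (simp add: set_lebesgue_integral_def D_def)
qed

lemma nn_integral_abs_diff_le_of_AE_tendsto:
  fixes f g :: "'a \<Rightarrow> real" and s :: "nat \<Rightarrow> 'a \<Rightarrow> real"
  assumes [measurable]: "f \<in> borel_measurable M" "\<And>i. s i \<in> borel_measurable M"
    and lim: "AE x in M. (\<lambda>i. s i x) \<longlonglongrightarrow> g x"
    and bound: "\<forall>\<^sub>F i in sequentially. (\<integral>\<^sup>+x. ennreal \<bar>f x - s i x\<bar> \<partial>M) \<le> e"
  shows "(\<integral>\<^sup>+x. ennreal \<bar>f x - g x\<bar> \<partial>M) \<le> e"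
proof -
  have "(\<integral>\<^sup>+x. ennreal \<bar>f x - g x\<bar> \<partial>M) = (\<integral>\<^sup>+x. liminf (\<lambda>i. ennreal \<bar>f x - s i x\<bar>) \<partial>M)"
  proof (rule nn_integral_cong_AE)
    show "AE x in M. ennreal \<bar>f x - g x\<bar> = liminf (\<lambda>i. ennreal \<bar>f x - s i x\<bar>)"
      using lim
    proof eventually_elim
      case (elim x)
      then have "(\<lambda>i. \<bar>f x - s i x\<bar>) \<longlonglongrightarrow> \<bar>f x - g x\<bar>"
        by (intro tendsto_rabs tendsto_diff tendsto_const)
      then have "(\<lambda>i. ennreal \<bar>f x - s i x\<bar>) \<longlonglongrightarrow> ennreal \<bar>f x - g x\<bar>"
        by (rule tendsto_ennrealI)
      then show ?case by (rule lim_imp_Liminf[OF trivial_limit_sequentially, symmetric])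
    qed
  qed
  also have "\<dots> \<le> liminf (\<lambda>i. \<integral>\<^sup>+x. ennreal \<bar>f x - s i x\<bar> \<partial>M)"
    by (rule nn_integral_liminf) measurable
  also have "\<dots> \<le> e"
    using bound by (intro Liminf_le) simp_all
  finally show ?thesis .
qed

lemma integral_abs_diff_le_of_L1_tendsto:
  fixes h g :: "'a \<Rightarrow> real" and u :: "nat \<Rightarrow> 'a \<Rightarrow> real"
  assumes "integrable M h" "integrable M g" "\<And>m. integrable M (u m)"
    and lim: "(\<lambda>m. \<integral>x. \<bar>u m x - g x\<bar> \<partial>M) \<longlonglongrightarrow> 0"
    and close: "\<forall>\<^sub>F m in sequentially. (\<integral>x. \<bar>h x - u m x\<bar> \<partial>M) \<le> d"
  shows "(\<integral>x. \<bar>h x - g x\<bar> \<partial>M) \<le> d"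
proof (rule tendsto_le[OF trivial_limit_sequentially])
  show "(\<lambda>m. d + (\<integral>x. \<bar>u m x - g x\<bar> \<partial>M)) \<longlonglongrightarrow> d"
    using tendsto_add[OF tendsto_const lim] by simp
  show "\<forall>\<^sub>F m in sequentially. (\<integral>x. \<bar>h x - g x\<bar> \<partial>M) \<le> d + (\<integral>x. \<bar>u m x - g x\<bar> \<partial>M)"
    using close
  proof eventually_elim
    case (elim m)
    with integral_abs_diff_triangle[of M h "u m" g] assms show ?case by simp
  qed
qed simp

lemma L1_limit_unique:
  fixes g g' :: "'a \<Rightarrow> real" and u :: "nat \<Rightarrow> 'a \<Rightarrow> real"
  assumes g: "integrable M g" and g': "integrable M g'" and u: "\<And>m. integrable M (u m)"
    and lim: "(\<lambda>m. \<integral>x. \<bar>u m x - g x\<bar> \<partial>M) \<longlonglongrightarrow> 0"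
    and lim': "(\<lambda>m. \<integral>x. \<bar>u m x - g' x\<bar> \<partial>M) \<longlonglongrightarrow> 0"
  shows "AE x in M. g x = g' x"
proof -
  have "(\<integral>x. \<bar>g x - g' x\<bar> \<partial>M) \<le> d" if "d > 0" for d
  proof (rule integral_abs_diff_le_of_L1_tendsto[OF g g' u lim'])
    have "\<forall>\<^sub>F m in sequentially. (\<integral>x. \<bar>u m x - g x\<bar> \<partial>M) < d"
      using order_tendstoD(2)[OF lim that] .
    then show "\<forall>\<^sub>F m in sequentially. (\<integral>x. \<bar>g x - u m x\<bar> \<partial>M) \<le> d"
      by eventually_elim (simp add: abs_minus_commute)
  qed
  then have "(\<integral>x. \<bar>g x - g' x\<bar> \<partial>M) = 0"
    by (metis Bochner_Integration.integral_nonneg abs_ge_zero dense_ge order.antisym)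
  with g g' have "AE x in M. \<bar>g x - g' x\<bar> = 0"
    by (subst (asm) integral_nonneg_eq_0_iff_AE) auto
  then show ?thesis by eventually_elim simp
qed

lemma set_integral_ge_of_L1_tendsto:
  fixes g :: "'a \<Rightarrow> real" and u :: "nat \<Rightarrow> 'a \<Rightarrow> real"
  assumes u: "\<And>n. integrable M (u n)" and g: "integrable M g" and A: "A \<in> sets M"
    and lim: "(\<lambda>n. \<integral>x. \<bar>u n x - g x\<bar> \<partial>M) \<longlonglongrightarrow> 0"
    and lower: "\<And>n. a \<le> (\<integral>x\<in>A. u n x \<partial>M)"
  shows "a \<le> (\<integral>x\<in>A. g x \<partial>M)"
proof (rule LIMSEQ_le_const)
  show "(\<lambda>n. (\<integral>x\<in>A. g x \<partial>M) + (\<integral>x. \<bar>u n x - g x\<bar> \<partial>M)) \<longlonglongrightarrow> (\<integral>x\<in>A. g x \<partial>M)"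
    using tendsto_add[OF tendsto_const lim] by simp
  have "a \<le> (\<integral>x\<in>A. g x \<partial>M) + (\<integral>x. \<bar>u n x - g x\<bar> \<partial>M)" for n
    using set_integral_diff_abs_le[OF u g A, of n] lower[of n] by linarith
  then show "\<exists>N. \<forall>n\<ge>N. a \<le> (\<integral>x\<in>A. g x \<partial>M) + (\<integral>x. \<bar>u n x - g x\<bar> \<partial>M)" by blast
qed

lemma nn_integral_abs_diff_le_of_Cauchy_subseq:
  fixes u :: "nat \<Rightarrow> 'a \<Rightarrow> real" and g :: "'a \<Rightarrow> real"
  assumes integrable: "\<And>n. integrable M (u n)" and [measurable]: "g \<in> borel_measurable M"
    and r: "strict_mono r" and lim: "AE x in M. (\<lambda>i. u (r i) x) \<longlonglongrightarrow> g x"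
    and N: "\<forall>n\<ge>N. \<forall>m\<ge>N. (\<integral>x. \<bar>u n x - u m x\<bar> \<partial>M) < e" and n: "n \<ge> N"
  shows "(\<integral>\<^sup>+x. ennreal \<bar>u n x - g x\<bar> \<partial>M) \<le> ennreal e"
proof (rule nn_integral_abs_diff_le_of_AE_tendsto[OF _ _ lim])
  have "(\<integral>\<^sup>+x. ennreal \<bar>u n x - u (r i) x\<bar> \<partial>M) \<le> ennreal e" if "i \<ge> N" for i
  proof -
    have "N \<le> r i" using seq_suble[OF r, of i] that by simp
    then have "(\<integral>x. \<bar>u n x - u (r i) x\<bar> \<partial>M) < e" using N n by blast
    then show ?thesis
      using integrable by (simp add: nn_integral_eq_integral ennreal_leI)
  qed
  then show "\<forall>\<^sub>F i in sequentially. (\<integral>\<^sup>+x. ennreal \<bar>u n x - u (r i) x\<bar> \<partial>M) \<le> ennreal e"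
    unfolding eventually_sequentially by blast
qed (use integrable in simp_all)

lemma L1_Cauchy_convergent:
  fixes u :: "nat \<Rightarrow> 'a \<Rightarrow> real"
  assumes integrable: "\<And>n. integrable M (u n)"
    and Cauchy: "\<And>e. e > 0 \<Longrightarrow> \<exists>N. \<forall>n\<ge>N. \<forall>m\<ge>N. (\<integral>x. \<bar>u n x - u m x\<bar> \<partial>M) < e"
  shows "\<exists>g. integrable M g \<and> (\<lambda>n. \<integral>x. \<bar>u n x - g x\<bar> \<partial>M) \<longlonglongrightarrow> 0"
proof -
  have [measurable]: "\<And>n. u n \<in> borel_measurable M" using integrable by simp
  obtain r where r: "strict_mono r" and Cauchy_AE: "AE x in M. Cauchy (\<lambda>i. u (r i) x)"
    using cauchy_L1_AE_cauchy_subseq[where s=u, OF integrable] Cauchy by auto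
  define g where "g x = lim (\<lambda>i. u (r i) x)" for x
  have [measurable]: "g \<in> borel_measurable M" unfolding g_def by measurable
  from Cauchy_AE have lim: "AE x in M. (\<lambda>i. u (r i) x) \<longlonglongrightarrow> g x"
    by eventually_elim (simp add: g_def Cauchy_convergent_iff convergent_LIMSEQ_iff)
  note close = nn_integral_abs_diff_le_of_Cauchy_subseq[OF integrable _ r lim]
  obtain N0 where N0: "\<forall>n\<ge>N0. \<forall>m\<ge>N0. (\<integral>x. \<bar>u n x - u m x\<bar> \<partial>M) < 1"
    using Cauchy[of 1] by auto
  have "integrable M (\<lambda>x. u N0 x - g x)"
    using le_less_trans[OF close[OF _ N0 order.refl] ennreal_less_top]
    by (intro integrableI_bounded) simp_all
  from Bochner_Integration.integrable_diff[OF integrable[of N0] this]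
  have g: "integrable M g" by simp
  have "(\<lambda>n. \<integral>x. \<bar>u n x - g x\<bar> \<partial>M) \<longlonglongrightarrow> 0"
  proof (rule order_tendstoI)
    fix e :: real assume "e > 0"
    then obtain N where N: "\<forall>n\<ge>N. \<forall>m\<ge>N. (\<integral>x. \<bar>u n x - u m x\<bar> \<partial>M) < e / 2"
      using Cauchy[of "e / 2"] by auto
    have "(\<integral>x. \<bar>u n x - g x\<bar> \<partial>M) < e" if "n \<ge> N" for n
    proof -
      have "(\<integral>x. \<bar>u n x - g x\<bar> \<partial>M) \<le> e / 2"
        using close[OF _ N that] integrable g \<open>e > 0\<close> by (simp add: nn_integral_eq_integral)
      with \<open>e > 0\<close> show ?thesis by simp
    qed
    then show "\<forall>\<^sub>F n in sequentially. (\<integral>x. \<bar>u n x - g x\<bar> \<partial>M) < e"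
      unfolding eventually_sequentially by blast
  qed (auto intro!: always_eventually less_le_trans[OF _ Bochner_Integration.integral_nonneg])
  with g show ?thesis by blast
qed

lemma mpds_iff_distr:
  "mpds M \<phi> \<longleftrightarrow> prob_space M \<and> \<phi> \<in> M \<rightarrow>\<^sub>M M \<and> distr M M \<phi> = M"
proof
  assume mp: "mpds M \<phi>"
  then interpret prob_space M by (simp add: mpds_def)
  have "distr M M \<phi> = M"
  proof (rule measure_eqI)
    fix A assume "A \<in> sets (distr M M \<phi>)"
    with mp show "emeasure (distr M M \<phi>) A = emeasure M A"
      by (simp add: mpds_def emeasure_distr emeasure_eq_measure)
  qed simp
  with mp show "prob_space M \<and> \<phi> \<in> M \<rightarrow>\<^sub>M M \<and> distr M M \<phi> = M"
    by (simp add: mpds_def)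
next
  assume "prob_space M \<and> \<phi> \<in> M \<rightarrow>\<^sub>M M \<and> distr M M \<phi> = M"
  then show "mpds M \<phi>"
    unfolding mpds_def by (metis measure_distr)
qed

lemma mpds_funpow:
  assumes "mpds M \<phi>"
  shows "mpds M (\<phi> ^^ n)"
proof (induction n)
  case 0
  with assms show ?case by (simp add: mpds_iff_distr distr_id2)
next
  case (Suc n)
  with assms have "distr M M (\<phi> ^^ n \<circ> \<phi>) = M"
    by (subst distr_distr[symmetric]) (auto simp: mpds_iff_distr)
  moreover have "\<phi> ^^ n \<circ> \<phi> \<in> M \<rightarrow>\<^sub>M M"
    using Suc assms by (auto simp: mpds_iff_distr intro: measurable_comp)
  ultimately have "mpds M (\<phi> ^^ n \<circ> \<phi>)"
    using assms by (simp add: mpds_iff_distr)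
  then show ?case by (simp only: funpow_Suc_right)
qed

locale mp_system =
  fixes M :: "'a measure" and \<phi> :: "'a \<Rightarrow> 'a"
  assumes mpds: "mpds M \<phi>"
begin

sublocale prob_space M
  using mpds by (simp add: mpds_def)

lemma measurable_map [measurable]: "\<phi> \<in> M \<rightarrow>\<^sub>M M"
  using mpds by (simp add: mpds_def)

lemma distr_map: "distr M M \<phi> = M"
  using mpds by (simp add: mpds_iff_distr)

lemma measure_vimage: "A \<in> sets M \<Longrightarrow> measure M (\<phi> -` A \<inter> space M) = measure M A"
  using mpds by (simp add: mpds_def)

lemma integral_comp_map:
  fixes w :: "'a \<Rightarrow> real"
  assumes [measurable]: "w \<in> borel_measurable M"
  shows "(\<integral>x. w (\<phi> x) \<partial>M) = (\<integral>x. w x \<partial>M)"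
  by (metis distr_map integral_distr measurable_map assms)

lemma integrable_comp_map:
  fixes w :: "'a \<Rightarrow> real"
  assumes "integrable M w"
  shows "integrable M (\<lambda>x. w (\<phi> x))"
  by (metis assms distr_map integrable_distr_eq measurable_map borel_measurable_integrable)

lemma AE_comp_map:
  assumes "AE x in M. Q x"
  shows "AE x in M. Q (\<phi> x)"
proof -
  have "AE x in distr M M \<phi>. Q x" using assms by (simp only: distr_map)
  then show ?thesis by (rule AE_distrD[OF measurable_map])
qed

lemma mp_system_funpow: "mp_system M (\<phi> ^^ n)"
  using mpds_funpow[OF mpds] by unfold_locales

end

section \<open>Perron-Frobenius operators\<close>

lemma perron_frobenius_comp:
  assumes P: "perron_frobenius M \<phi> P" and Q: "perron_frobenius M \<psi> Q"
    and [measurable]: "\<phi> \<in> M \<rightarrow>\<^sub>M M" "\<psi> \<in> M \<rightarrow>\<^sub>M M"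
  shows "perron_frobenius M (\<phi> \<circ> \<psi>) (P \<circ> Q)"
  unfolding perron_frobenius_def
proof (intro allI impI conjI ballI)
  fix f :: "'a \<Rightarrow> real" assume f: "integrable M f"
  then show "integrable M ((P \<circ> Q) f)"
    using P Q by (simp add: perron_frobenius_def)
  fix A assume [measurable]: "A \<in> sets M"
  have "\<psi> -` (\<phi> -` A \<inter> space M) \<inter> space M = (\<phi> \<circ> \<psi>) -` A \<inter> space M"
    using measurable_space[of \<psi> M M] by auto
  with P Q f show "(\<integral>x\<in>A. (P \<circ> Q) f x \<partial>M) = (\<integral>x\<in>(\<phi> \<circ> \<psi>) -` A \<inter> space M. f x \<partial>M)"
    by (simp add: perron_frobenius_def)
qed

locale pf_system = mp_system +
  fixes P :: "('a \<Rightarrow> real) \<Rightarrow> ('a \<Rightarrow> real)"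
  assumes perron_frobenius: "perron_frobenius M \<phi> P"
begin

lemma pf_system_funpow: "pf_system M (\<phi> ^^ n) (P ^^ n)"
proof (intro pf_system.intro pf_system_axioms.intro mp_system_funpow)
  show "perron_frobenius M (\<phi> ^^ n) (P ^^ n)"
  proof (induction n)
    case 0
    show ?case by (simp add: perron_frobenius_def set_lebesgue_integral_def indicator_def)
  next
    case (Suc n)
    interpret iterate: mp_system M "\<phi> ^^ n" by (rule mp_system_funpow)
    show ?case
      unfolding funpow.simps(2)
      by (rule perron_frobenius_comp[OF perron_frobenius Suc measurable_map iterate.measurable_map])
  qed
qed

lemma pf_integrable: "integrable M f \<Longrightarrow> integrable M (P f)"
  using perron_frobenius by (simp add: perron_frobenius_def)

lemma pf_funpow_integrable: "integrable M f \<Longrightarrow> integrable M ((P ^^ n) f)"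
  by (induction n) (simp_all add: pf_integrable)

lemma pf_set_integral:
  "integrable M f \<Longrightarrow> A \<in> sets M \<Longrightarrow> (\<integral>x\<in>A. P f x \<partial>M) = (\<integral>x\<in>\<phi> -` A \<inter> space M. f x \<partial>M)"
  using perron_frobenius by (simp add: perron_frobenius_def)

lemma pf_integral:
  assumes "integrable M f"
  shows "(\<integral>x. P f x \<partial>M) = (\<integral>x. f x \<partial>M)"
  using pf_set_integral[OF assms sets.top] measurable_space[OF measurable_map]
  by (simp add: set_integral_space pf_integrable assms Int_absorb1 subset_eq)

lemma pf_nonneg:
  assumes f: "integrable M f" and nonneg: "AE x in M. 0 \<le> f x"
  shows "AE x in M. 0 \<le> P f x"
proof (rule density_nonneg[OF pf_integrable[OF f]])
  fix A assume "A \<in> sets M"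
  have "0 \<le> (\<integral>x\<in>\<phi> -` A \<inter> space M. f x \<partial>M)"
    unfolding set_lebesgue_integral_def using nonneg
    by (intro integral_nonneg_AE) (auto elim: AE_mp)
  with f \<open>A \<in> sets M\<close> show "0 \<le> (\<integral>x\<in>A. P f x \<partial>M)"
    by (simp add: pf_set_integral)
qed

lemma pf_measurable [measurable]: "integrable M f \<Longrightarrow> P f \<in> borel_measurable M"
  using pf_integrable by blast

lemma pf_diff:
  assumes f: "integrable M f" and g: "integrable M g"
  shows "AE x in M. P (\<lambda>x. f x - g x) x = P f x - P g x"
proof (rule density_unique_real)
  show "integrable M (P (\<lambda>x. f x - g x))" "integrable M (\<lambda>x. P f x - P g x)"
    using f g by (simp_all add: pf_integrable)
  fix A assume A[measurable]: "A \<in> sets M"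
  have A'[measurable]: "\<phi> -` A \<inter> space M \<in> sets M" by measurable
  have "(\<integral>x\<in>A. P (\<lambda>x. f x - g x) x \<partial>M) = (\<integral>x\<in>\<phi> -` A \<inter> space M. f x - g x \<partial>M)"
    using f g by (simp add: pf_set_integral)
  also have "\<dots> = (\<integral>x\<in>A. P f x \<partial>M) - (\<integral>x\<in>A. P g x \<partial>M)"
    using f g by (simp add: pf_set_integral set_integrable_of_integrable)
  also have "\<dots> = (\<integral>x\<in>A. P f x - P g x \<partial>M)"
    using f g by (simp add: pf_integrable set_integrable_of_integrable)
  finally show "(\<integral>x\<in>A. P (\<lambda>x. f x - g x) x \<partial>M) = (\<integral>x\<in>A. P f x - P g x \<partial>M)" .
qed

lemma pf_add:
  assumes f: "integrable M f" and g: "integrable M g"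
  shows "AE x in M. P (\<lambda>x. f x + g x) x = P f x + P g x"
proof (rule density_unique_real)
  show "integrable M (P (\<lambda>x. f x + g x))" "integrable M (\<lambda>x. P f x + P g x)"
    using f g by (simp_all add: pf_integrable)
  fix A assume A[measurable]: "A \<in> sets M"
  have A'[measurable]: "\<phi> -` A \<inter> space M \<in> sets M" by measurable
  have "(\<integral>x\<in>A. P (\<lambda>x. f x + g x) x \<partial>M) = (\<integral>x\<in>\<phi> -` A \<inter> space M. f x + g x \<partial>M)"
    using f g by (simp add: pf_set_integral)
  also have "\<dots> = (\<integral>x\<in>A. P f x \<partial>M) + (\<integral>x\<in>A. P g x \<partial>M)"
    using f g by (simp add: pf_set_integral set_integrable_of_integrable set_integral_add)
  also have "\<dots> = (\<integral>x\<in>A. P f x + P g x \<partial>M)"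
    using f g by (simp add: pf_integrable set_integrable_of_integrable set_integral_add)
  finally show "(\<integral>x\<in>A. P (\<lambda>x. f x + g x) x \<partial>M) = (\<integral>x\<in>A. P f x + P g x \<partial>M)" .
qed

lemma pf_const: "AE x in M. P (\<lambda>_. c) x = c"
proof (rule density_unique_real)
  show "integrable M (P (\<lambda>_. c))" "integrable M (\<lambda>_. c)"
    by (simp_all add: pf_integrable)
  fix A assume A[measurable]: "A \<in> sets M"
  have "\<phi> -` A \<inter> space M \<in> sets M" by measurable
  then show "(\<integral>x\<in>A. P (\<lambda>_. c) x \<partial>M) = (\<integral>x\<in>A. c \<partial>M)"
    by (simp add: pf_set_integral set_integral_const measure_vimage)
qed

lemma pf_le_const:
  assumes f: "integrable M f" and le: "AE x in M. f x \<le> c"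
  shows "AE x in M. P f x \<le> c"
proof -
  have "AE x in M. 0 \<le> P (\<lambda>x. c - f x) x"
    using f le by (intro pf_nonneg) auto
  moreover have "AE x in M. P (\<lambda>x. c - f x) x = P (\<lambda>_. c) x - P f x"
    using f by (intro pf_diff) auto
  ultimately show ?thesis
    using pf_const[of c] by eventually_elim simp
qed

lemma pf_abs_le:
  assumes f: "integrable M f"
  shows "AE x in M. \<bar>P f x\<bar> \<le> P (\<lambda>x. \<bar>f x\<bar>) x"
proof -
  have "AE x in M. 0 \<le> P (\<lambda>x. \<bar>f x\<bar> - f x) x" "AE x in M. 0 \<le> P (\<lambda>x. \<bar>f x\<bar> + f x) x"
    using f by (auto intro!: pf_nonneg)
  moreover have "AE x in M. P (\<lambda>x. \<bar>f x\<bar> - f x) x = P (\<lambda>x. \<bar>f x\<bar>) x - P f x"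
    "AE x in M. P (\<lambda>x. \<bar>f x\<bar> + f x) x = P (\<lambda>x. \<bar>f x\<bar>) x + P f x"
    using f by (auto intro!: pf_diff pf_add)
  ultimately show ?thesis
    by eventually_elim simp
qed

lemma pf_L1_contraction:
  assumes f: "integrable M f" and g: "integrable M g"
  shows "(\<integral>x. \<bar>P f x - P g x\<bar> \<partial>M) \<le> (\<integral>x. \<bar>f x - g x\<bar> \<partial>M)"
proof -
  have fg: "integrable M (\<lambda>x. f x - g x)" using f g by simp
  have "(\<integral>x. \<bar>P f x - P g x\<bar> \<partial>M) = (\<integral>x. \<bar>P (\<lambda>x. f x - g x) x\<bar> \<partial>M)"
    using pf_diff[OF f g] f g fg by (intro integral_cong_AE) (auto elim: AE_mp)
  also have "\<dots> \<le> (\<integral>x. P (\<lambda>x. \<bar>f x - g x\<bar>) x \<partial>M)"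
    using pf_abs_le[OF fg] fg by (intro integral_mono_AE) (auto simp: pf_integrable)
  also have "\<dots> = (\<integral>x. \<bar>f x - g x\<bar> \<partial>M)"
    using fg by (simp add: pf_integral)
  finally show ?thesis .
qed

lemma density_pf:
  assumes u: "integrable M u" and nonneg: "AE x in M. 0 \<le> u x"
  shows "density M (\<lambda>x. ennreal (P u x)) = distr (density M (\<lambda>x. ennreal (u x))) M \<phi>"
proof (rule measure_eqI)
  fix A assume "A \<in> sets (density M (\<lambda>x. ennreal (P u x)))"
  then have A[measurable]: "A \<in> sets M" by simp
  have "emeasure (density M (\<lambda>x. ennreal (P u x))) A = ennreal (\<integral>x\<in>A. P u x \<partial>M)"
    using pf_integrable[OF u] pf_nonneg[OF u nonneg] by (simp add: emeasure_density_set_integral)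
  also have "\<dots> = ennreal (\<integral>x\<in>\<phi> -` A \<inter> space M. u x \<partial>M)"
    using u by (simp add: pf_set_integral)
  also have "\<dots> = emeasure (distr (density M (\<lambda>x. ennreal (u x))) M \<phi>) A"
    using u nonneg by (simp add: emeasure_density_set_integral emeasure_distr)
  finally show "emeasure (density M (\<lambda>x. ennreal (P u x))) A
      = emeasure (distr (density M (\<lambda>x. ennreal (u x))) M \<phi>) A" .
qed simp

lemma pf_adjoint:
  fixes v :: "'a \<Rightarrow> real"
  assumes u: "integrable M u" and nonneg: "AE x in M. 0 \<le> u x"
    and v[measurable]: "v \<in> borel_measurable M"
  shows "(\<integral>x. P u x * v x \<partial>M) = (\<integral>x. u x * v (\<phi> x) \<partial>M)"
proof -
  have [measurable]: "u \<in> borel_measurable M" using u by simp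
  have "(\<integral>x. P u x * v x \<partial>M) = integral\<^sup>L (density M (\<lambda>x. ennreal (P u x))) v"
    using pf_nonneg[OF u nonneg] u by (simp add: integral_density pf_integrable)
  also have "\<dots> = integral\<^sup>L (density M (\<lambda>x. ennreal (u x))) (\<lambda>x. v (\<phi> x))"
    using u nonneg by (simp add: density_pf integral_distr)
  also have "\<dots> = (\<integral>x. u x * v (\<phi> x) \<partial>M)"
    using nonneg by (simp add: integral_density)
  finally show ?thesis .
qed

lemma integral_square_diff_pf:
  assumes u: "integrable M u" and nonneg: "AE x in M. 0 \<le> u x" and le: "AE x in M. u x \<le> c"
  shows "(\<integral>x. (u x - P u (\<phi> x))\<^sup>2 \<partial>M) = (\<integral>x. (u x)\<^sup>2 \<partial>M) - (\<integral>x. (P u x)\<^sup>2 \<partial>M)"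
proof -
  define v where "v = P u"
  have [measurable]: "u \<in> borel_measurable M" "v \<in> borel_measurable M"
    using u by (auto simp: v_def)
  have "AE x in M. \<bar>u x\<bar> \<le> c" using nonneg le by eventually_elim simp
  moreover have "AE x in M. \<bar>v x\<bar> \<le> c"
    using pf_nonneg[OF u nonneg] pf_le_const[OF u le] unfolding v_def by eventually_elim simp
  then have "AE x in M. \<bar>v (\<phi> x)\<bar> \<le> c" by (rule AE_comp_map)
  ultimately have bounded: "AE x in M. \<bar>u x\<bar> \<le> c \<and> \<bar>v (\<phi> x)\<bar> \<le> c"
    by eventually_elim simp
  have products: "AE x in M. \<bar>u x * u x\<bar> \<le> c * c \<and> \<bar>u x * v (\<phi> x)\<bar> \<le> c * c
      \<and> \<bar>v (\<phi> x) * v (\<phi> x)\<bar> \<le> c * c"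
    using bounded by eventually_elim (auto simp only: abs_mult intro!: mult_mono' abs_ge_zero)
  have integrable: "integrable M (\<lambda>x. u x * u x)" "integrable M (\<lambda>x. u x * v (\<phi> x))"
    "integrable M (\<lambda>x. v (\<phi> x) * v (\<phi> x))"
    using products by (auto intro!: integrable_const_bound[where B="c * c"] elim: AE_mp)
  have "(\<integral>x. (u x - v (\<phi> x))\<^sup>2 \<partial>M)
      = (\<integral>x. u x * u x - 2 * (u x * v (\<phi> x)) + v (\<phi> x) * v (\<phi> x) \<partial>M)"
    by (intro Bochner_Integration.integral_cong) (auto simp: power2_eq_square algebra_simps)
  also have "\<dots> = (\<integral>x. u x * u x \<partial>M) - 2 * (\<integral>x. u x * v (\<phi> x) \<partial>M)
      + (\<integral>x. v (\<phi> x) * v (\<phi> x) \<partial>M)"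
    using integrable by simp
  also have "(\<integral>x. u x * v (\<phi> x) \<partial>M) = (\<integral>x. v x * v x \<partial>M)"
    using pf_adjoint[OF u nonneg, of v] by (simp add: v_def u)
  also have "(\<integral>x. v (\<phi> x) * v (\<phi> x) \<partial>M) = (\<integral>x. v x * v x \<partial>M)"
    by (rule integral_comp_map[of "\<lambda>x. v x * v x"]) measurable
  finally show ?thesis by (simp add: v_def power2_eq_square)
qed

end

section \<open>The minorization condition\<close>

definition minorization_condition :: "'a measure \<Rightarrow> ('a \<Rightarrow> 'a) \<Rightarrow> bool" where
  "minorization_condition M \<phi> \<longleftrightarrow> (\<forall>B\<in>sets M. measure M B > 0 \<longrightarrow>
      (\<exists>D\<in>sets M. \<exists>c::real. measure M D > 0 \<and> c > 0 \<and>
        liminf (\<lambda>n. INF A\<in>sets M.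
           ereal (measure M ((\<phi> ^^ n) -` A \<inter> space M \<inter> B) - c * measure M (D \<inter> A))) \<ge> 0))"

context mp_system
begin

lemma minorization_null_alternating:
  assumes minor: "minorization_condition M \<phi>"
    and B[measurable]: "B \<in> sets M" and C[measurable]: "\<And>k. C k \<in> sets M"
    and orbit: "\<And>k. AE x in M. x \<in> B \<longrightarrow> (\<phi> ^^ k) x \<in> C k"
    and disjoint: "\<And>k. C k \<inter> C (Suc k) = {}"
  shows "measure M B = 0"
proof (rule ccontr)
  assume "measure M B \<noteq> 0"
  then have "measure M B > 0" using measure_nonneg[of M B] by linarith
  then obtain D c where D[measurable]: "D \<in> sets M" and D_pos: "measure M D > 0" and c: "c > 0"
    and lim: "liminf (\<lambda>n. INF A\<in>sets M.
           ereal (measure M ((\<phi> ^^ n) -` A \<inter> space M \<inter> B) - c * measure M (D \<inter> A))) \<ge> 0"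
    using minor B unfolding minorization_condition_def by blast
  define e where "e = c * measure M D / 2"
  have "e > 0" using c D_pos by (simp add: e_def)
  with lim have "\<forall>\<^sub>F n in sequentially. ereal (- e) < (INF A\<in>sets M.
      ereal (measure M ((\<phi> ^^ n) -` A \<inter> space M \<inter> B) - c * measure M (D \<inter> A)))"
    unfolding le_Liminf_iff by (auto simp: zero_ereal_def)
  then obtain N where N: "\<And>n. n \<ge> N \<Longrightarrow> ereal (- e) < (INF A\<in>sets M.
      ereal (measure M ((\<phi> ^^ n) -` A \<inter> space M \<inter> B) - c * measure M (D \<inter> A)))"
    unfolding eventually_sequentially by blast
  \<comment> \<open>The orbit of \<open>B\<close> avoids \<open>D - C n\<close>, so the minorization forces \<open>D - C n\<close> to be small.\<close>
  have small: "c * measure M (D - C n) < e" if "n \<ge> N" for n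
  proof -
    have [measurable]: "D - C n \<in> sets M" by measurable
    have "- e < measure M ((\<phi> ^^ n) -` (D - C n) \<inter> space M \<inter> B) - c * measure M (D \<inter> (D - C n))"
      using less_le_trans[OF N[OF that] INF_lower[of "D - C n"]] by simp
    moreover have "measure M ((\<phi> ^^ n) -` (D - C n) \<inter> space M \<inter> B) = measure M {}"
      using orbit[of n] by (intro measure_eq_AE) (auto elim: AE_mp)
    ultimately show ?thesis by (simp add: Int_absorb1)
  qed
  have "measure M D \<le> measure M ((D - C N) \<union> (D - C (Suc N)))"
    using disjoint[of N] by (intro finite_measure_mono) auto
  also have "\<dots> \<le> measure M (D - C N) + measure M (D - C (Suc N))"
    by (intro measure_Un_le) auto
  finally have "c * measure M D \<le> c * measure M (D - C N) + c * measure M (D - C (Suc N))"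
    using c by (simp add: distrib_left[symmetric])
  also have "\<dots> < e + e" using small[of N] small[of "Suc N"] by simp
  finally show False by (simp add: e_def)
qed

lemma minorization_shift_chain_AE_eq:
  assumes minor: "minorization_condition M \<phi>"
    and S[measurable]: "\<And>i. S i \<in> sets M"
    and shift: "\<And>i. AE x in M. x \<in> S i \<longleftrightarrow> \<phi> x \<in> S (Suc i)"
  shows "AE x in M. x \<in> S 0 \<longleftrightarrow> x \<in> S 1"
proof -
  have shift_all: "AE x in M. \<forall>i. x \<in> S i \<longleftrightarrow> \<phi> x \<in> S (Suc i)"
    using shift by (simp add: AE_all_countable)
  have iterate: "AE x in M. \<forall>i. x \<in> S i \<longleftrightarrow> (\<phi> ^^ k) x \<in> S (i + k)" for k
  proof (induction k)
    case (Suc k)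
    interpret iterate: mp_system M "\<phi> ^^ k" by (rule mp_system_funpow)
    show ?case using Suc iterate.AE_comp_map[OF shift_all] by eventually_elim simp
  qed simp
  have orbit: "AE x in M. (x \<in> S 0 \<longleftrightarrow> (\<phi> ^^ k) x \<in> S k) \<and> (x \<in> S 1 \<longleftrightarrow> (\<phi> ^^ k) x \<in> S (Suc k))"
    for k
    using iterate[of k] by eventually_elim (metis add_0 plus_1_eq_Suc)
  have "measure M (S 0 - S 1) = 0"
  proof (rule minorization_null_alternating[OF minor, where C="\<lambda>k. S k - S (Suc k)"])
    show "AE x in M. x \<in> S 0 - S 1 \<longrightarrow> (\<phi> ^^ k) x \<in> S k - S (Suc k)" for k
      using orbit[of k] by eventually_elim auto
  qed auto
  moreover have "measure M (S 1 - S 0) = 0"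
  proof (rule minorization_null_alternating[OF minor, where C="\<lambda>k. S (Suc k) - S k"])
    show "AE x in M. x \<in> S 1 - S 0 \<longrightarrow> (\<phi> ^^ k) x \<in> S (Suc k) - S k" for k
      using orbit[of k] by eventually_elim auto
  qed auto
  ultimately have "S 0 - S 1 \<in> null_sets M" "S 1 - S 0 \<in> null_sets M"
    by (auto simp: null_sets_def emeasure_eq_measure)
  then have "AE x in M. x \<notin> S 0 - S 1" "AE x in M. x \<notin> S 1 - S 0"
    using AE_not_in by blast+
  then show ?thesis by eventually_elim auto
qed

lemma minorization_shift_chain_functions_AE_eq:
  fixes T :: "nat \<Rightarrow> 'a \<Rightarrow> real"
  assumes minor: "minorization_condition M \<phi>"
    and T[measurable]: "\<And>j. T j \<in> borel_measurable M"
    and shift: "\<And>j. AE x in M. T (Suc j) (\<phi> x) = T j x"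
  shows "AE x in M. T j x = T 0 x"
proof (induction j)
  case (Suc j)
  have "AE x in M. of_rat q < T j x \<longleftrightarrow> of_rat q < T (Suc j) x" for q
  proof -
    define S where "S i = {x \<in> space M. of_rat q < T (j + i) x}" for i
    have [measurable]: "S i \<in> sets M" for i unfolding S_def by measurable
    have "AE x in M. x \<in> S 0 \<longleftrightarrow> x \<in> S 1"
    proof (rule minorization_shift_chain_AE_eq[OF minor])
      show "AE x in M. x \<in> S i \<longleftrightarrow> \<phi> x \<in> S (Suc i)" for i
        using shift[of "j + i"] AE_space
        by eventually_elim (auto simp: S_def measurable_space[OF measurable_map])
    qed measurable
    then show ?thesis using AE_space by eventually_elim (auto simp: S_def)
  qed
  then have "AE x in M. \<forall>q. of_rat q < T j x \<longleftrightarrow> of_rat q < T (Suc j) x"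
    by (simp add: AE_all_countable)
  then have "AE x in M. T (Suc j) x = T j x"
    by eventually_elim (simp add: eq_of_rat_less_iff)
  with Suc show ?case by eventually_elim simp
qed simp

end

section \<open>Orbits of bounded nonnegative functions\<close>

locale pf_bounded_orbit = pf_system +
  fixes f :: "'a \<Rightarrow> real" and c :: real
  assumes integrable_f: "integrable M f"
    and nonneg_f: "AE x in M. 0 \<le> f x" and bounded_f: "AE x in M. f x \<le> c"
begin

lemma orbit_integrable: "integrable M ((P ^^ n) f)"
  using integrable_f by (rule pf_funpow_integrable)

lemma orbit_nonneg: "AE x in M. 0 \<le> (P ^^ n) f x"
proof -
  interpret iterate: pf_system M "\<phi> ^^ n" "P ^^ n" by (rule pf_system_funpow)
  show ?thesis using integrable_f nonneg_f by (rule iterate.pf_nonneg)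
qed

lemma orbit_bounded: "AE x in M. (P ^^ n) f x \<le> c"
proof -
  interpret iterate: pf_system M "\<phi> ^^ n" "P ^^ n" by (rule pf_system_funpow)
  show ?thesis using integrable_f bounded_f by (rule iterate.pf_le_const)
qed

lemma orbit_measurable [measurable]: "(P ^^ n) f \<in> borel_measurable M"
  using orbit_integrable by simp

definition energy :: "nat \<Rightarrow> real" where
  "energy n = (\<integral>x. ((P ^^ n) f x)\<^sup>2 \<partial>M)"

lemma energy_diff:
  "(\<integral>x. ((P ^^ n) f x - (P ^^ (n + k)) f ((\<phi> ^^ k) x))\<^sup>2 \<partial>M) = energy n - energy (n + k)"
proof -
  interpret iterate: pf_system M "\<phi> ^^ k" "P ^^ k" by (rule pf_system_funpow)
  have "(P ^^ (n + k)) f = (P ^^ k) ((P ^^ n) f)" by (simp add: funpow_add add.commute)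
  then show ?thesis
    unfolding energy_def
    using iterate.integral_square_diff_pf[OF orbit_integrable orbit_nonneg orbit_bounded] by simp
qed

lemma energy_decseq: "decseq energy"
proof (rule decseq_SucI)
  fix n
  have "0 \<le> energy n - energy (n + 1)"
    unfolding energy_diff[of n 1, symmetric] by (rule Bochner_Integration.integral_nonneg) simp
  then show "energy (Suc n) \<le> energy n" by simp
qed

definition energy_limit :: real where
  "energy_limit = (INF n. energy n)"

lemma energy_tendsto: "energy \<longlonglongrightarrow> energy_limit"
  and energy_limit_le: "energy_limit \<le> energy n"
proof -
  have "bdd_below (range energy)"
    by (rule bdd_belowI[of _ 0]) (auto simp: energy_def)
  then show "energy \<longlonglongrightarrow> energy_limit" "energy_limit \<le> energy n"
    unfolding energy_limit_def using LIMSEQ_decseq_INF[OF _ energy_decseq]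
    by (auto intro: cINF_lower)
qed

text \<open>\<open>shifted_orbit j n\<close> is \<open>h\<^sub>n\<^sub>+\<^sub>j \<circ> \<phi>\<^sup>n\<close> and \<open>orbit_limit j\<close> is \<open>T\<^sub>j\<close> in the notation above.\<close>

definition shifted_orbit :: "nat \<Rightarrow> nat \<Rightarrow> 'a \<Rightarrow> real" where
  "shifted_orbit j n x = (P ^^ (n + j)) f ((\<phi> ^^ n) x)"

lemma shifted_orbit_measurable [measurable]: "shifted_orbit j n \<in> borel_measurable M"
  unfolding shifted_orbit_def by measurable

lemma shifted_orbit_bounded: "AE x in M. \<bar>shifted_orbit j n x\<bar> \<le> c"
proof -
  interpret iterate: mp_system M "\<phi> ^^ n" by (rule mp_system_funpow)
  have "AE x in M. \<bar>(P ^^ (n + j)) f x\<bar> \<le> c"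
    using orbit_nonneg[of "n + j"] orbit_bounded[of "n + j"] by eventually_elim simp
  then show ?thesis unfolding shifted_orbit_def by (rule iterate.AE_comp_map)
qed

lemma shifted_orbit_integrable: "integrable M (shifted_orbit j n)"
  using shifted_orbit_bounded by (intro integrable_const_bound[where B=c]) auto

lemma shifted_orbit_square_diff:
  assumes "n \<le> m"
  shows "(\<integral>x. (shifted_orbit j n x - shifted_orbit j m x)\<^sup>2 \<partial>M) = energy (n + j) - energy (m + j)"
proof -
  interpret iterate: mp_system M "\<phi> ^^ n" by (rule mp_system_funpow)
  obtain k where m: "m = n + k" using assms le_iff_add by blast
  have "shifted_orbit j m x = (P ^^ (n + j + k)) f ((\<phi> ^^ k) ((\<phi> ^^ n) x))" for x
    unfolding shifted_orbit_def m by (simp add: funpow_add ac_simps)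
  then have "(\<integral>x. (shifted_orbit j n x - shifted_orbit j m x)\<^sup>2 \<partial>M)
      = (\<integral>x. (\<lambda>y. ((P ^^ (n + j)) f y - (P ^^ (n + j + k)) f ((\<phi> ^^ k) y))\<^sup>2) ((\<phi> ^^ n) x) \<partial>M)"
    by (simp add: shifted_orbit_def)
  also have "\<dots> = (\<integral>y. ((P ^^ (n + j)) f y - (P ^^ (n + j + k)) f ((\<phi> ^^ k) y))\<^sup>2 \<partial>M)"
    by (rule iterate.integral_comp_map) measurable
  also have "\<dots> = energy (n + j) - energy (m + j)"
    using energy_diff[of "n + j" k] by (simp add: m ac_simps)
  finally show ?thesis .
qed

lemma shifted_orbit_L1_close:
  assumes "n \<le> m" and "d > 0" and "energy (n + j) - energy_limit \<le> d\<^sup>2"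
  shows "(\<integral>x. \<bar>shifted_orbit j n x - shifted_orbit j m x\<bar> \<partial>M) \<le> d"
proof (rule integral_abs_le_of_integral_square_le)
  have "AE x in M. \<bar>(shifted_orbit j n x - shifted_orbit j m x)\<^sup>2\<bar> \<le> (2 * c)\<^sup>2"
    using shifted_orbit_bounded[of j n] shifted_orbit_bounded[of j m]
  proof eventually_elim
    case (elim x)
    then have "\<bar>shifted_orbit j n x - shifted_orbit j m x\<bar> \<le> 2 * c" by linarith
    then show ?case by (metis abs_ge_zero abs_power2 power2_abs power_mono)
  qed
  then show "integrable M (\<lambda>x. (shifted_orbit j n x - shifted_orbit j m x)\<^sup>2)"
    by (intro integrable_const_bound[where B="(2 * c)\<^sup>2"]) auto
  show "(\<integral>x. (shifted_orbit j n x - shifted_orbit j m x)\<^sup>2 \<partial>M) \<le> d\<^sup>2"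
    using shifted_orbit_square_diff[OF \<open>n \<le> m\<close>] energy_limit_le[of "m + j"] assms(3) by simp
qed (use assms shifted_orbit_integrable in auto)

lemma shifted_orbit_Cauchy:
  assumes "e > 0"
  shows "\<exists>N. \<forall>n\<ge>N. \<forall>m\<ge>N. (\<integral>x. \<bar>shifted_orbit j n x - shifted_orbit j m x\<bar> \<partial>M) < e"
proof -
  have "\<forall>\<^sub>F n in sequentially. energy n < energy_limit + (e / 2)\<^sup>2"
    using order_tendstoD(2)[OF energy_tendsto, of "energy_limit + (e / 2)\<^sup>2"] assms by simp
  then obtain N where "energy N < energy_limit + (e / 2)\<^sup>2"
    unfolding eventually_sequentially by blast
  then have N: "energy N - energy_limit \<le> (e / 2)\<^sup>2" by simp
  have close: "(\<integral>x. \<bar>shifted_orbit j n x - shifted_orbit j m x\<bar> \<partial>M) \<le> e / 2"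
    if "N \<le> n" "n \<le> m" for n m
  proof (rule shifted_orbit_L1_close[OF \<open>n \<le> m\<close>])
    have "energy (n + j) \<le> energy N" using energy_decseq that(1) by (simp add: decseq_def)
    with N show "energy (n + j) - energy_limit \<le> (e / 2)\<^sup>2" by simp
  qed (use assms in simp)
  show ?thesis
  proof (intro exI allI impI)
    fix n m assume "N \<le> n" "N \<le> m"
    with close[of n m] close[of m n] assms
    show "(\<integral>x. \<bar>shifted_orbit j n x - shifted_orbit j m x\<bar> \<partial>M) < e"
      by (cases "n \<le> m") (auto simp: abs_minus_commute)
  qed
qed

definition orbit_limit :: "nat \<Rightarrow> 'a \<Rightarrow> real" where
  "orbit_limit j =
    (SOME g. integrable M g \<and> (\<lambda>n. \<integral>x. \<bar>shifted_orbit j n x - g x\<bar> \<partial>M) \<longlonglongrightarrow> 0)"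

lemma orbit_limit_integrable: "integrable M (orbit_limit j)"
  and shifted_orbit_tendsto: "(\<lambda>n. \<integral>x. \<bar>shifted_orbit j n x - orbit_limit j x\<bar> \<partial>M) \<longlonglongrightarrow> 0"
proof -
  have "\<exists>g. integrable M g \<and> (\<lambda>n. \<integral>x. \<bar>shifted_orbit j n x - g x\<bar> \<partial>M) \<longlonglongrightarrow> 0"
    by (rule L1_Cauchy_convergent[OF shifted_orbit_integrable shifted_orbit_Cauchy])
  then have "integrable M (orbit_limit j)
      \<and> (\<lambda>n. \<integral>x. \<bar>shifted_orbit j n x - orbit_limit j x\<bar> \<partial>M) \<longlonglongrightarrow> 0"
    unfolding orbit_limit_def by (rule someI_ex)
  then show "integrable M (orbit_limit j)"
    "(\<lambda>n. \<integral>x. \<bar>shifted_orbit j n x - orbit_limit j x\<bar> \<partial>M) \<longlonglongrightarrow> 0" by auto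
qed

lemma orbit_limit_shift: "AE x in M. orbit_limit (Suc j) (\<phi> x) = orbit_limit j x"
proof (rule L1_limit_unique[where u="\<lambda>n. shifted_orbit j (Suc n)"])
  show "integrable M (\<lambda>x. orbit_limit (Suc j) (\<phi> x))"
    using orbit_limit_integrable by (rule integrable_comp_map)
  have "shifted_orbit j (Suc n) x = shifted_orbit (Suc j) n (\<phi> x)" for n x
    unfolding shifted_orbit_def by (simp add: funpow_Suc_right del: funpow.simps)
  then have "(\<integral>x. \<bar>shifted_orbit j (Suc n) x - orbit_limit (Suc j) (\<phi> x)\<bar> \<partial>M)
      = (\<integral>x. \<bar>shifted_orbit (Suc j) n x - orbit_limit (Suc j) x\<bar> \<partial>M)" for n
    using orbit_limit_integrable
    by (simp add: integral_comp_map[of "\<lambda>x. \<bar>shifted_orbit (Suc j) n x - orbit_limit (Suc j) x\<bar>"])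
  with shifted_orbit_tendsto[of "Suc j"]
  show "(\<lambda>n. \<integral>x. \<bar>shifted_orbit j (Suc n) x - orbit_limit (Suc j) (\<phi> x)\<bar> \<partial>M) \<longlonglongrightarrow> 0"
    by simp
  show "(\<lambda>n. \<integral>x. \<bar>shifted_orbit j (Suc n) x - orbit_limit j x\<bar> \<partial>M) \<longlonglongrightarrow> 0"
    using LIMSEQ_Suc[OF shifted_orbit_tendsto] .
qed (simp_all add: orbit_limit_integrable shifted_orbit_integrable)

lemma orbit_L1_close_to_limit:
  assumes "d > 0" and "energy j - energy_limit \<le> d\<^sup>2"
  shows "(\<integral>x. \<bar>(P ^^ j) f x - orbit_limit j x\<bar> \<partial>M) \<le> d"
proof (rule integral_abs_diff_le_of_L1_tendsto[OF _ _ _ shifted_orbit_tendsto])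
  have "(\<integral>x. \<bar>shifted_orbit j 0 x - shifted_orbit j m x\<bar> \<partial>M) \<le> d" for m
    using assms by (intro shifted_orbit_L1_close) auto
  then show "\<forall>\<^sub>F m in sequentially. (\<integral>x. \<bar>(P ^^ j) f x - shifted_orbit j m x\<bar> \<partial>M) \<le> d"
    by (simp add: shifted_orbit_def[of j 0])
qed (simp_all add: orbit_integrable orbit_limit_integrable shifted_orbit_integrable)

lemma orbit_L1_tendsto:
  assumes minor: "minorization_condition M \<phi>"
  shows "(\<lambda>n. \<integral>x. \<bar>(P ^^ n) f x - orbit_limit 0 x\<bar> \<partial>M) \<longlonglongrightarrow> 0"
proof (rule order_tendstoI)
  fix e :: real assume "e > 0"
  have "\<forall>\<^sub>F n in sequentially. energy n < energy_limit + (e / 2)\<^sup>2"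
    using order_tendstoD(2)[OF energy_tendsto, of "energy_limit + (e / 2)\<^sup>2"] \<open>e > 0\<close> by simp
  then show "\<forall>\<^sub>F n in sequentially. (\<integral>x. \<bar>(P ^^ n) f x - orbit_limit 0 x\<bar> \<partial>M) < e"
  proof eventually_elim
    case (elim n)
    have "AE x in M. orbit_limit n x = orbit_limit 0 x"
      using minorization_shift_chain_functions_AE_eq[OF minor, where T=orbit_limit]
        orbit_limit_shift orbit_limit_integrable by simp
    then have "(\<integral>x. \<bar>(P ^^ n) f x - orbit_limit 0 x\<bar> \<partial>M)
        = (\<integral>x. \<bar>(P ^^ n) f x - orbit_limit n x\<bar> \<partial>M)"
      using orbit_limit_integrable by (intro integral_cong_AE) (auto elim: AE_mp)
    also have "\<dots> \<le> e / 2"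
      using elim \<open>e > 0\<close> by (intro orbit_L1_close_to_limit) auto
    finally show ?case using \<open>e > 0\<close> by simp
  qed
qed (auto intro!: always_eventually less_le_trans[OF _ Bochner_Integration.integral_nonneg])

end

section \<open>Convergence of all orbits\<close>

definition L1_convergent_orbit ::
  "'a measure \<Rightarrow> (('a \<Rightarrow> real) \<Rightarrow> ('a \<Rightarrow> real)) \<Rightarrow> ('a \<Rightarrow> real) \<Rightarrow> bool" where
  "L1_convergent_orbit M P f \<longleftrightarrow>
     (\<exists>g. integrable M g \<and> (\<lambda>n. \<integral>x. \<bar>(P ^^ n) f x - g x\<bar> \<partial>M) \<longlonglongrightarrow> 0)"

lemma sot_convergent_L1_iff:
  "sot_convergent_L1 M P \<longleftrightarrow> (\<forall>f. integrable M f \<longrightarrow> L1_convergent_orbit M P f)"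
  by (simp add: sot_convergent_L1_def L1_convergent_orbit_def)

context pf_system
begin

lemma orbit_convergent_diff:
  assumes f: "integrable M f" and g: "integrable M g"
    and "L1_convergent_orbit M P f" "L1_convergent_orbit M P g"
  shows "L1_convergent_orbit M P (\<lambda>x. f x - g x)"
proof -
  obtain F G where F: "integrable M F" "(\<lambda>n. \<integral>x. \<bar>(P ^^ n) f x - F x\<bar> \<partial>M) \<longlonglongrightarrow> 0"
    and G: "integrable M G" "(\<lambda>n. \<integral>x. \<bar>(P ^^ n) g x - G x\<bar> \<partial>M) \<longlonglongrightarrow> 0"
    using assms(3,4) unfolding L1_convergent_orbit_def by blast
  have bound: "(\<integral>x. \<bar>(P ^^ n) (\<lambda>x. f x - g x) x - (F x - G x)\<bar> \<partial>M)
      \<le> (\<integral>x. \<bar>(P ^^ n) f x - F x\<bar> \<partial>M) + (\<integral>x. \<bar>(P ^^ n) g x - G x\<bar> \<partial>M)" for n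
  proof -
    interpret iterate: pf_system M "\<phi> ^^ n" "P ^^ n" by (rule pf_system_funpow)
    have [measurable]: "(P ^^ n) f \<in> borel_measurable M" "(P ^^ n) g \<in> borel_measurable M"
      "(P ^^ n) (\<lambda>x. f x - g x) \<in> borel_measurable M"
      "F \<in> borel_measurable M" "G \<in> borel_measurable M"
      using f g F G by (simp_all add: iterate.pf_measurable)
    have "(\<integral>x. \<bar>(P ^^ n) (\<lambda>x. f x - g x) x - (F x - G x)\<bar> \<partial>M)
        = (\<integral>x. \<bar>((P ^^ n) f x - F x) - ((P ^^ n) g x - G x)\<bar> \<partial>M)"
    proof (rule integral_cong_AE)
      show "AE x in M. \<bar>(P ^^ n) (\<lambda>x. f x - g x) x - (F x - G x)\<bar>
          = \<bar>((P ^^ n) f x - F x) - ((P ^^ n) g x - G x)\<bar>"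
        using iterate.pf_diff[OF f g] by eventually_elim simp
    qed measurable
    also have "\<dots> \<le> (\<integral>x. \<bar>(P ^^ n) f x - F x\<bar> + \<bar>(P ^^ n) g x - G x\<bar> \<partial>M)"
      using f g F G by (intro integral_mono) (auto simp: iterate.pf_integrable)
    also have "\<dots> = (\<integral>x. \<bar>(P ^^ n) f x - F x\<bar> \<partial>M) + (\<integral>x. \<bar>(P ^^ n) g x - G x\<bar> \<partial>M)"
      using f g F G by (intro Bochner_Integration.integral_add) (auto simp: iterate.pf_integrable)
    finally show ?thesis .
  qed
  have "(\<lambda>n. (\<integral>x. \<bar>(P ^^ n) f x - F x\<bar> \<partial>M) + (\<integral>x. \<bar>(P ^^ n) g x - G x\<bar> \<partial>M)) \<longlonglongrightarrow> 0"
    using tendsto_add[OF F(2) G(2)] by simp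
  then have "(\<lambda>n. \<integral>x. \<bar>(P ^^ n) (\<lambda>x. f x - g x) x - (F x - G x)\<bar> \<partial>M) \<longlonglongrightarrow> 0"
  proof (rule tendsto_sandwich[OF _ _ tendsto_const, rotated 2])
    show "\<forall>\<^sub>F n in sequentially. 0 \<le> (\<integral>x. \<bar>(P ^^ n) (\<lambda>x. f x - g x) x - (F x - G x)\<bar> \<partial>M)"
      by simp
  qed (use bound in simp)
  with F(1) G(1) show ?thesis
    unfolding L1_convergent_orbit_def by (intro exI[of _ "\<lambda>x. F x - G x"]) simp
qed

lemma orbit_convergent_of_approx:
  assumes f: "integrable M f"
    and approx: "\<And>e. e > 0 \<Longrightarrow>
      \<exists>g. integrable M g \<and> (\<integral>x. \<bar>f x - g x\<bar> \<partial>M) < e \<and> L1_convergent_orbit M P g"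
  shows "L1_convergent_orbit M P f"
proof -
  have "\<exists>N. \<forall>n\<ge>N. \<forall>m\<ge>N. (\<integral>x. \<bar>(P ^^ n) f x - (P ^^ m) f x\<bar> \<partial>M) < e" if "e > 0" for e
  proof -
    obtain g G where g: "integrable M g" "(\<integral>x. \<bar>f x - g x\<bar> \<partial>M) < e / 4"
      and G: "integrable M G" "(\<lambda>n. \<integral>x. \<bar>(P ^^ n) g x - G x\<bar> \<partial>M) \<longlonglongrightarrow> 0"
      using approx[of "e / 4"] \<open>e > 0\<close> unfolding L1_convergent_orbit_def by auto
    obtain N where N: "\<And>n. n \<ge> N \<Longrightarrow> (\<integral>x. \<bar>(P ^^ n) g x - G x\<bar> \<partial>M) < e / 4"
      using order_tendstoD(2)[OF G(2), of "e / 4"] \<open>e > 0\<close>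
      unfolding eventually_sequentially by auto
    have close: "(\<integral>x. \<bar>(P ^^ n) f x - G x\<bar> \<partial>M) < e / 2" if "n \<ge> N" for n
    proof -
      interpret iterate: pf_system M "\<phi> ^^ n" "P ^^ n" by (rule pf_system_funpow)
      have "(\<integral>x. \<bar>(P ^^ n) f x - G x\<bar> \<partial>M)
          \<le> (\<integral>x. \<bar>(P ^^ n) f x - (P ^^ n) g x\<bar> \<partial>M) + (\<integral>x. \<bar>(P ^^ n) g x - G x\<bar> \<partial>M)"
        using f g G by (intro integral_abs_diff_triangle) (auto simp: pf_funpow_integrable)
      also have "(\<integral>x. \<bar>(P ^^ n) f x - (P ^^ n) g x\<bar> \<partial>M) \<le> (\<integral>x. \<bar>f x - g x\<bar> \<partial>M)"
        by (rule iterate.pf_L1_contraction[OF f g(1)])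
      finally show ?thesis using g(2) N[OF that] by simp
    qed
    show ?thesis
    proof (intro exI allI impI)
      fix n m assume "n \<ge> N" "m \<ge> N"
      have "(\<integral>x. \<bar>(P ^^ n) f x - (P ^^ m) f x\<bar> \<partial>M)
          \<le> (\<integral>x. \<bar>(P ^^ n) f x - G x\<bar> \<partial>M) + (\<integral>x. \<bar>G x - (P ^^ m) f x\<bar> \<partial>M)"
        using f G by (intro integral_abs_diff_triangle) (auto simp: pf_funpow_integrable)
      with close[OF \<open>n \<ge> N\<close>] close[OF \<open>m \<ge> N\<close>]
      show "(\<integral>x. \<bar>(P ^^ n) f x - (P ^^ m) f x\<bar> \<partial>M) < e"
        by (simp add: abs_minus_commute)
    qed
  qed
  then show ?thesis
    unfolding L1_convergent_orbit_def using f
    by (intro L1_Cauchy_convergent) (auto simp: pf_funpow_integrable)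
qed

lemma orbit_convergent_bounded:
  assumes minor: "minorization_condition M \<phi>"
    and f: "integrable M f" and bounded: "AE x in M. \<bar>f x\<bar> \<le> c"
  shows "L1_convergent_orbit M P f"
proof -
  have "L1_convergent_orbit M P h"
    if "integrable M h" "AE x in M. 0 \<le> h x" "AE x in M. h x \<le> c" for h
  proof -
    interpret pf_bounded_orbit M \<phi> P h c by unfold_locales (use that in auto)
    show ?thesis
      unfolding L1_convergent_orbit_def
      using orbit_L1_tendsto[OF minor] orbit_limit_integrable by blast
  qed
  note nonneg_convergent = this
  have "L1_convergent_orbit M P (\<lambda>x. max (f x) 0)" "L1_convergent_orbit M P (\<lambda>x. max (- f x) 0)"
  proof -
    have "AE x in M. max (f x) 0 \<le> c \<and> max (- f x) 0 \<le> c"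
      using bounded by eventually_elim auto
    then show "L1_convergent_orbit M P (\<lambda>x. max (f x) 0)"
      "L1_convergent_orbit M P (\<lambda>x. max (- f x) 0)"
      using f by (auto intro!: nonneg_convergent elim: AE_mp)
  qed
  then have "L1_convergent_orbit M P (\<lambda>x. max (f x) 0 - max (- f x) 0)"
    using f by (intro orbit_convergent_diff) auto
  moreover have "(\<lambda>x. max (f x) 0 - max (- f x) 0) = f" by (auto simp: max_def)
  ultimately show ?thesis by simp
qed

lemma orbit_convergent_of_minorization:
  assumes minor: "minorization_condition M \<phi>" and f: "integrable M f"
  shows "L1_convergent_orbit M P f"
proof (rule orbit_convergent_of_approx[OF f])
  have [measurable]: "f \<in> borel_measurable M" using f by simp
  define t where "t k x = max (- real k) (min (real k) (f x))" for k x
  have t_bounded: "\<bar>t k x\<bar> \<le> real k" for k x unfolding t_def by auto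
  have [measurable]: "t k \<in> borel_measurable M" for k unfolding t_def by measurable
  have t_integrable: "integrable M (t k)" for k
    using t_bounded by (intro integrable_const_bound[where B="real k"]) auto
  have "(\<lambda>k. \<integral>x. \<bar>f x - t k x\<bar> \<partial>M) \<longlonglongrightarrow> (\<integral>x. 0 \<partial>M)"
  proof (rule integral_dominated_convergence[where w="\<lambda>x. \<bar>f x\<bar>"])
    show "AE x in M. (\<lambda>k. \<bar>f x - t k x\<bar>) \<longlonglongrightarrow> 0"
    proof (rule AE_I2)
      fix x
      obtain k0 :: nat where "\<bar>f x\<bar> \<le> real k0" using real_arch_simple by blast
      then have "\<forall>k\<ge>k0. \<bar>f x - t k x\<bar> = 0" unfolding t_def by auto
      then show "(\<lambda>k. \<bar>f x - t k x\<bar>) \<longlonglongrightarrow> 0"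
        by (intro tendsto_eventually) (auto simp: eventually_sequentially)
    qed
    show "AE x in M. norm \<bar>f x - t k x\<bar> \<le> \<bar>f x\<bar>" for k
      unfolding t_def by (intro AE_I2) auto
  qed (use f in \<open>simp_all add: t_def\<close>)
  then have truncation: "(\<lambda>k. \<integral>x. \<bar>f x - t k x\<bar> \<partial>M) \<longlonglongrightarrow> 0" by simp
  fix e :: real assume "e > 0"
  then obtain k where "(\<integral>x. \<bar>f x - t k x\<bar> \<partial>M) < e"
    using order_tendstoD(2)[OF truncation \<open>e > 0\<close>] by (auto simp: eventually_sequentially)
  moreover have "L1_convergent_orbit M P (t k)"
    using minor t_integrable t_bounded by (intro orbit_convergent_bounded) auto
  ultimately show "\<exists>g. integrable M g \<and> (\<integral>x. \<bar>f x - g x\<bar> \<partial>M) < e \<and> L1_convergent_orbit M P g"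
    using t_integrable by blast
qed

end

section \<open>Orbit convergence implies the minorization condition\<close>

context pf_system
begin

lemma set_integral_orbit_indicator:
  assumes A[measurable]: "A \<in> sets M" and B[measurable]: "B \<in> sets M"
  shows "(\<integral>x\<in>A. (P ^^ n) (indicator B) x \<partial>M) = measure M ((\<phi> ^^ n) -` A \<inter> space M \<inter> B)"
proof -
  interpret iterate: pf_system M "\<phi> ^^ n" "P ^^ n" by (rule pf_system_funpow)
  have [measurable]: "(\<phi> ^^ n) -` A \<inter> space M \<in> sets M" by measurable
  have "(\<integral>x\<in>A. (P ^^ n) (indicator B) x \<partial>M) = (\<integral>x\<in>(\<phi> ^^ n) -` A \<inter> space M. indicator B x \<partial>M)"
    by (intro iterate.pf_set_integral integrable_indicator_real A B)
  also have "\<dots> = (\<integral>x. indicator ((\<phi> ^^ n) -` A \<inter> space M \<inter> B) x \<partial>M)"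
    unfolding set_lebesgue_integral_def by (simp add: indicator_inter_arith)
  also have "\<dots> = measure M ((\<phi> ^^ n) -` A \<inter> space M \<inter> B)"
    by (simp add: Int_absorb2)
  finally show ?thesis .
qed

lemma indicator_orbit_limit:
  assumes B: "B \<in> sets M" and g: "integrable M g"
    and lim: "(\<lambda>n. \<integral>x. \<bar>(P ^^ n) (indicator B) x - g x\<bar> \<partial>M) \<longlonglongrightarrow> 0"
  shows "AE x in M. 0 \<le> g x" and "measure M B \<le> (\<integral>x. g x \<partial>M)"
proof -
  have orbit: "integrable M ((P ^^ n) (indicator B))" for n
    using B by (intro pf_funpow_integrable integrable_indicator_real)
  show "AE x in M. 0 \<le> g x"
  proof (rule density_nonneg[OF g])
    fix A assume "A \<in> sets M"
    with B show "0 \<le> (\<integral>x\<in>A. g x \<partial>M)"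
      by (intro set_integral_ge_of_L1_tendsto[OF orbit g _ lim])
      (simp_all add: set_integral_orbit_indicator)
  qed
  have "(\<phi> ^^ n) -` space M \<inter> space M \<inter> B = B" for n
  proof -
    interpret iterate: mp_system M "\<phi> ^^ n" by (rule mp_system_funpow)
    show ?thesis
      using sets.sets_into_space[OF B] measurable_space[OF iterate.measurable_map] by auto
  qed
  with B have "measure M B \<le> (\<integral>x\<in>space M. g x \<partial>M)"
    by (intro set_integral_ge_of_L1_tendsto[OF orbit g _ lim])
      (simp_all add: set_integral_orbit_indicator)
  with g show "measure M B \<le> (\<integral>x. g x \<partial>M)" by (simp add: set_integral_space)
qed

lemma minorization_at_set_of_convergent:
  assumes B[measurable]: "B \<in> sets M" and B_pos: "measure M B > 0"
    and convergent: "L1_convergent_orbit M P (indicator B)"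
  shows "\<exists>D\<in>sets M. \<exists>c::real. measure M D > 0 \<and> c > 0 \<and>
    liminf (\<lambda>n. INF A\<in>sets M.
      ereal (measure M ((\<phi> ^^ n) -` A \<inter> space M \<inter> B) - c * measure M (D \<inter> A))) \<ge> 0"
proof -
  obtain g where g: "integrable M g"
    and lim: "(\<lambda>n. \<integral>x. \<bar>(P ^^ n) (indicator B) x - g x\<bar> \<partial>M) \<longlonglongrightarrow> 0"
    using convergent unfolding L1_convergent_orbit_def by blast
  have "(\<integral>x. g x \<partial>M) > 0" using indicator_orbit_limit(2)[OF B g lim] B_pos by simp
  then obtain c where c: "c > 0" and D_pos: "measure M {x \<in> space M. c \<le> g x} > 0"
    using exists_level_set_pos[OF g] by blast
  define D where "D = {x \<in> space M. c \<le> g x}"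
  have D: "D \<in> sets M" using g unfolding D_def by measurable
  define err where "err n = (\<integral>x. \<bar>(P ^^ n) (indicator B) x - g x\<bar> \<partial>M)" for n
  have "ereal (- err n) \<le> (INF A\<in>sets M.
      ereal (measure M ((\<phi> ^^ n) -` A \<inter> space M \<inter> B) - c * measure M (D \<inter> A)))" for n
  proof (rule INF_greatest)
    fix A assume A: "A \<in> sets M"
    have "integrable M ((P ^^ n) (indicator B))"
      using B by (intro pf_funpow_integrable integrable_indicator_real)
    from set_integral_diff_abs_le[OF this g A] A B
    have "(\<integral>x\<in>A. g x \<partial>M) - err n \<le> measure M ((\<phi> ^^ n) -` A \<inter> space M \<inter> B)"
      by (simp add: set_integral_orbit_indicator err_def)
    moreover have "c * measure M (D \<inter> A) \<le> (\<integral>x\<in>A. g x \<partial>M)"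
      unfolding D_def
      by (rule set_integral_ge_level_set[OF g indicator_orbit_limit(1)[OF B g lim] A])
    ultimately show "ereal (- err n)
        \<le> ereal (measure M ((\<phi> ^^ n) -` A \<inter> space M \<inter> B) - c * measure M (D \<inter> A))"
      by simp
  qed
  then have "liminf (\<lambda>n. ereal (- err n)) \<le> liminf (\<lambda>n. INF A\<in>sets M.
      ereal (measure M ((\<phi> ^^ n) -` A \<inter> space M \<inter> B) - c * measure M (D \<inter> A)))"
    by (intro Liminf_mono) simp
  moreover have "liminf (\<lambda>n. ereal (- err n)) = 0"
    using lim_imp_Liminf[OF trivial_limit_sequentially tendsto_ereal[OF tendsto_minus[OF lim]]]
    by (simp add: zero_ereal_def err_def)
  ultimately show ?thesis
    using D D_pos c by (auto simp: D_def)
qed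

lemma minorization_of_sot_convergent:
  assumes "sot_convergent_L1 M P"
  shows "minorization_condition M \<phi>"
  unfolding minorization_condition_def
proof (intro ballI impI)
  fix B assume "B \<in> sets M" "measure M B > 0"
  with assms show "\<exists>D\<in>sets M. \<exists>c::real. measure M D > 0 \<and> c > 0 \<and>
      liminf (\<lambda>n. INF A\<in>sets M.
        ereal (measure M ((\<phi> ^^ n) -` A \<inter> space M \<inter> B) - c * measure M (D \<inter> A))) \<ge> 0"
    by (intro minorization_at_set_of_convergent)
      (auto simp: sot_convergent_L1_iff integrable_indicator_real)
qed

end

theorem proposition2p1:
  fixes M :: "'a measure" and \<phi> :: "'a \<Rightarrow> 'a" and P :: "('a \<Rightarrow> real) \<Rightarrow> ('a \<Rightarrow> real)"
  assumes "mpds M \<phi>" and "perron_frobenius M \<phi> P"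
  shows "sot_convergent_L1 M P \<longleftrightarrow>
    (\<forall>B\<in>sets M. measure M B > 0 \<longrightarrow>
      (\<exists>D\<in>sets M. \<exists>c::real. measure M D > 0 \<and> c > 0 \<and>
        liminf (\<lambda>n. INF A\<in>sets M.
           ereal (measure M ((\<phi> ^^ n) -` A \<inter> space M \<inter> B) - c * measure M (D \<inter> A))) \<ge> 0))"
proof -
  interpret pf_system M \<phi> P by unfold_locales (use assms in auto)
  have "sot_convergent_L1 M P \<longleftrightarrow> minorization_condition M \<phi>"
    using minorization_of_sot_convergent orbit_convergent_of_minorization
    by (auto simp: sot_convergent_L1_iff)
  then show ?thesis by (simp only: minorization_condition_def)
qed

end
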